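(* Let $q$ be a prime power, let $n>1$ and $k\ge 1$ be integers with $\gcd(n,k)=1$, and let $f(x)$ be an irreducible polynomial of degree $n$ over $\mathbb{F}_q$. Let $\alpha,\beta\in\mathbb{F}_{q^k}$ with $\alpha\neq 0$, and set $g(x):=f(\alpha x+\beta)\in\mathbb{F}_{q^k}[x]$. Then the polynomial $$F(x)=\prod_{a=0}^{k-1} g^{(a)}(x),$$ which has degree $nk$ and coefficients in $\mathbb{F}_q$, is irreducible over $\mathbb{F}_q$ if and only if $\mathbb{F}_q(\alpha,\beta)=\mathbb{F}_{q^k}$.
   Context: For a polynomial $g(x)=\sum_{u=0}^{m} b_u x^u$ with coefficients in $\mathbb{F}_{q^k}$ and an integer $a\ge 0$, write $g^{(a)}(x)=\sum_{u=0}^{m} b_u^{q^a}x^u$. $\mathbb{F}_q(\alpha,\beta)$ denotes the smallest subfield of $\mathbb{F}_{q^k}$ containing $\mathbb{F}_q$, $\alpha$ and $\beta$. *)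

theory Defs
  imports "HOL-Computational_Algebra.Computational_Algebra" "HOL-Library.Cardinality"
begin

definition is_subfield :: "'b::field set \<Rightarrow> bool" where
  "is_subfield K \<longleftrightarrow> 0 \<in> K \<and> 1 \<in> K \<and>
     (\<forall>x\<in>K. \<forall>y\<in>K. x + y \<in> K \<and> x * y \<in> K) \<and>
     (\<forall>x\<in>K. - x \<in> K \<and> inverse x \<in> K)"

definition gen_subfield :: "'b::field set \<Rightarrow> 'b set" where
  "gen_subfield S = \<Inter> {K. is_subfield K \<and> S \<subseteq> K}"

definition frob_poly :: "nat \<Rightarrow> nat \<Rightarrow> 'b::field poly \<Rightarrow> 'b poly" where
  "frob_poly q a g = map_poly (\<lambda>c. c ^ (q ^ a)) g"

end

theory Submission
  imports Defs "HOL-Algebra.Algebraic_Closure_Type" "HOL-Combinatorics.Cycles"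
begin

text \<open>
  Write q = |F_q| and let Frobenius denote the map z to z^q. Since g^(k) = g, the
  Frobenius permutes the factors of F, so F has coefficients in F_q; its degree is nk.

  If alpha and beta do not generate F_(q^k), they lie in a proper subfield F_(q^d),
  d a proper divisor of k; then g^(d) = g and F is the (k/d)-th power of a polynomial
  over F_q, hence reducible.

  If they do generate F_(q^k), we pass to an algebraic closure. Every root theta of the
  irreducible f has least Frobenius period exactly n (its orbit polynomial comes from
  F_q[x] and is divisible by f). For a root w of g the element alpha w + beta is a root
  of f, and from gcd(n,k) = 1 one deduces that w has least period nk. Every root of F is
  a Frobenius image of such a w, so every nonconstant factor of F over F_q has at least
  nk distinct roots, and F is irreducible.
\<close>

hide_const (open) up_ring.coeff up_ring.monom Polynomials.degree Divisibility.irreducible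

section \<open>Ring morphisms\<close>

locale ring_morphism =
  fixes h :: "'x::comm_ring_1 \<Rightarrow> 'y::comm_ring_1"
  assumes hom_add: "h (x + y) = h x + h y"
    and hom_mult: "h (x * y) = h x * h y"
    and hom_one: "h 1 = 1"
begin

lemma hom_zero: "h 0 = 0"
  using hom_add[of 0 0] by simp

lemma hom_uminus: "h (- x) = - h x"
  using hom_add[of x "- x"] by (simp add: hom_zero add_eq_0_iff2)

lemma hom_diff: "h (x - y) = h x - h y"
  using hom_add[of x "- y"] by (simp add: hom_uminus)

lemma hom_power: "h (x ^ m) = h x ^ m"
  by (induction m) (simp_all add: hom_one hom_mult)

lemma hom_sum: "h (sum u A) = (\<Sum>a\<in>A. h (u a))"
  by (induction A rule: infinite_finite_induct) (simp_all add: hom_zero hom_add)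

lemma hom_prod: "h (prod u A) = (\<Prod>a\<in>A. h (u a))"
  by (induction A rule: infinite_finite_induct) (simp_all add: hom_one hom_mult)

lemma hom_of_nat: "h (of_nat m) = of_nat m"
  by (induction m) (simp_all add: hom_zero hom_one hom_add)

lemma map_poly_morphism: "ring_morphism (map_poly h)"
proof
  show "map_poly h (p + q) = map_poly h p + map_poly h q" for p q
    by (rule poly_eqI) (simp add: coeff_map_poly hom_zero hom_add)
  show "map_poly h (p * q) = map_poly h p * map_poly h q" for p q
    by (rule poly_eqI) (simp add: coeff_map_poly hom_zero coeff_mult hom_sum hom_mult)
  show "map_poly h 1 = 1"
    by (simp add: hom_one)
qed

lemma map_poly_pCons: "map_poly h (pCons c p) = pCons (h c) (map_poly h p)"
  by (rule poly_eqI) (simp add: coeff_map_poly hom_zero coeff_pCons split: nat.split)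

lemma poly_map_poly: "poly (map_poly h p) (h x) = h (poly p x)"
  by (induction p) (simp_all add: map_poly_pCons hom_add hom_mult hom_zero)

lemma map_poly_pcompose: "map_poly h (pcompose p r) = pcompose (map_poly h p) (map_poly h r)"
proof -
  interpret P: ring_morphism "map_poly h" by (rule map_poly_morphism)
  show ?thesis
    by (induction p) (simp_all add: map_poly_pCons pcompose_pCons P.hom_add P.hom_mult hom_zero)
qed

end

lemma ring_morphism_comp:
  "ring_morphism g \<Longrightarrow> ring_morphism h \<Longrightarrow> ring_morphism (g \<circ> h)"
  by (simp add: ring_morphism_def)

context
  fixes h :: "'x::field \<Rightarrow> 'y::comm_ring_1"
  assumes h: "ring_morphism h"
begin

interpretation ring_morphism h by (rule h)

lemma morphism_eq_0_iff: "h x = 0 \<longleftrightarrow> x = 0"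
proof
  assume "h x = 0"
  hence "h (x * inverse x) = 0" by (simp add: hom_mult)
  thus "x = 0" by (cases "x = 0") (simp_all add: hom_one)
qed (simp add: hom_zero)

lemma morphism_inj: "inj h"
  by (rule injI) (metis hom_diff morphism_eq_0_iff right_minus_eq)

lemma degree_map_poly_morphism: "degree (map_poly h p) = degree p"
  by (rule degree_map_poly) (simp add: morphism_eq_0_iff)

lemma map_poly_morphism_inj: "map_poly h p = map_poly h r \<Longrightarrow> p = r"
  by (rule poly_eqI) (metis coeff_map_poly hom_zero injD morphism_inj)

end

lemma morphism_inverse:
  fixes h :: "'x::field \<Rightarrow> 'y::field"
  assumes "ring_morphism h"
  shows "h (inverse x) = inverse (h x)"
proof (cases "x = 0")
  case False
  have "h x * h (inverse x) = 1"
    using False ring_morphism.hom_mult[OF assms, of x "inverse x"] ring_morphism.hom_one[OF assms]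
    by simp
  thus ?thesis by (rule inverse_unique[symmetric])
qed (simp add: ring_morphism.hom_zero[OF assms])

section \<open>Finite fields and the Frobenius\<close>

lemma is_subfield_UNIV: "is_subfield UNIV"
  by (simp add: is_subfield_def)

text \<open>Every nonzero element of a finite subfield K satisfies x^(|K|-1) = 1, since
  multiplication by x permutes the nonzero elements of K; hence x^|K| = x on K.\<close>
lemma subfield_power_card:
  assumes K: "is_subfield K" and fin: "finite K" and x: "x \<in> K"
  shows "x ^ card K = x"
proof -
  have "0 \<in> K" using K by (simp add: is_subfield_def)
  hence card_K: "card K = Suc (card (K - {0}))"
    using fin card_gt_0_iff[of K] by auto
  show ?thesis
  proof (cases "x = 0")
    case False
    have closed: "y * z \<in> K" "inverse y \<in> K" if "y \<in> K" "z \<in> K" for y z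
      using K that by (auto simp: is_subfield_def)
    have "(\<Prod>y\<in>K-{0}. x * y) = (\<Prod>y\<in>K-{0}. y)"
      by (rule prod.reindex_bij_witness[of _ "\<lambda>y. y / x" "\<lambda>y. x * y"])
         (use False x closed in \<open>auto simp: divide_inverse\<close>)
    hence "x ^ card (K - {0}) * (\<Prod>y\<in>K-{0}. y) = 1 * (\<Prod>y\<in>K-{0}. y)"
      by (simp add: prod.distrib)
    moreover have "(\<Prod>y\<in>K-{0}. y) \<noteq> 0" using fin by simp
    ultimately have "x ^ card (K - {0}) = 1" by (metis mult_right_cancel)
    thus ?thesis by (simp add: card_K)
  qed (simp add: card_K)
qed

lemma power_card_field: "(x::'x::{field,finite}) ^ CARD('x) = x"
  using subfield_power_card[OF is_subfield_UNIV, of x] by simp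

lemma power_power_fixed_mult:
  fixes x :: "'m::monoid_mult"
  assumes "x ^ (q ^ m) = x"
  shows "x ^ (q ^ (m * t)) = x"
  by (induction t) (simp_all add: power_add power_mult assms)

lemma power_power_add:
  fixes x :: "'m::monoid_mult"
  shows "x ^ (q ^ (a + b)) = (x ^ (q ^ a)) ^ (q ^ b)"
  by (simp add: power_add power_mult)

lemma power_power_fixed_gcd:
  fixes x :: "'m::monoid_mult"
  assumes m: "x ^ (q ^ m) = x" and l: "x ^ (q ^ l) = x"
  shows "x ^ (q ^ gcd m l) = x"
proof (cases "m = 0")
  case False
  then obtain a b where ab: "m * a = l * b + gcd m l" using bezout_nat[of m l] by auto
  have "x = x ^ (q ^ (m * a))" using power_power_fixed_mult[OF m] by simp
  also have "\<dots> = (x ^ (q ^ (l * b))) ^ (q ^ gcd m l)"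
    unfolding ab power_power_add ..
  also have "\<dots> = x ^ (q ^ gcd m l)" by (simp only: power_power_fixed_mult[OF l])
  finally show ?thesis by simp
qed (use l in simp)

lemma power_card_power_field: "(x::'x::{field,finite}) ^ (CARD('x) ^ j) = x"
  using power_power_fixed_mult[of x "CARD('x)" 1 j] by (simp add: power_card_field)

lemma card_field_ge_2: "CARD('x::{field,finite}) \<ge> 2"
proof -
  have "card {0::'x, 1} \<le> CARD('x)" by (intro card_mono) auto
  thus ?thesis by simp
qed

lemma card_power_fixed_le:
  assumes N: "N \<ge> 2"
  shows "finite {z::'y::idom. z ^ N = z}" "card {z::'y. z ^ N = z} \<le> N"
proof -
  define P :: "'y poly" where "P = monom 1 N - [:0, 1:]"
  have "coeff P N = 1" using N by (simp add: P_def coeff_pCons split: nat.split)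
  hence P0: "P \<noteq> 0" by auto
  have deg: "degree P \<le> N" unfolding P_def
    by (rule order.trans[OF degree_diff_le_max]) (use N in \<open>auto simp: degree_monom_eq\<close>)
  have roots: "{z::'y. z ^ N = z} = {z. poly P z = 0}" by (simp add: P_def poly_monom)
  show "finite {z::'y. z ^ N = z}" unfolding roots by (rule poly_roots_finite[OF P0])
  show "card {z::'y. z ^ N = z} \<le> N"
    unfolding roots using card_poly_roots_bound[OF P0] deg by simp
qed

text \<open>The binomial coefficients (q choose i), 0 < i < q, vanish in a field with q
  elements: (X+1)^q and X^q+1 agree at all q points and have degree q.\<close>
lemma binomial_card_field_eq_0:
  assumes "0 < i" "i < CARD('x::{field,finite})"
  shows "of_nat (CARD('x) choose i) = (0::'x)"
proof -
  define q where "q = CARD('x)"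
  have q2: "q \<ge> 2" unfolding q_def by (rule card_field_ge_2)
  have "[:1, 1:] ^ q = (monom 1 q + 1 :: 'x poly)"
  proof (rule poly_eqI_degree_lead_coeff[where n = q and A = UNIV])
    show "coeff ([:1, 1:] ^ q) q = coeff (monom 1 q + 1 :: 'x poly) q"
      using q2 by (simp add: coeff_linear_power)
    show "degree ([:1, 1:] ^ q :: 'x poly) \<le> q"
      by (rule order.trans[OF degree_power_le]) simp
    show "degree (monom 1 q + 1 :: 'x poly) \<le> q"
      by (rule order.trans[OF degree_add_le_max]) (simp add: degree_monom_eq)
    show "poly ([:1, 1:] ^ q) z = poly (monom 1 q + 1) z" for z :: 'x
      by (simp add: q_def poly_monom power_card_field add.commute)
  qed (simp add: q_def)
  hence "coeff ([:1, 1:] ^ q) i = coeff (monom 1 q + 1 :: 'x poly) i" by simp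
  thus ?thesis using assms unfolding q_def
    by (simp add: coeff_linear_poly_power coeff_monom)
qed

lemma frobenius_morphism:
  fixes h :: "'x::{field,finite} \<Rightarrow> 'y::comm_ring_1"
  assumes h: "ring_morphism h"
  shows "ring_morphism (\<lambda>y::'y. y ^ (CARD('x) ^ j))"
proof -
  define q where "q = CARD('x)"
  have q: "q > 0" unfolding q_def using card_field_ge_2[where 'x='x] by simp
  have binomial_0: "of_nat (q choose i) = (0::'y)" if "0 < i" "i < q" for i
    using binomial_card_field_eq_0[OF that[unfolded q_def]] ring_morphism.hom_of_nat[OF h]
      ring_morphism.hom_zero[OF h] unfolding q_def by metis
  have add: "(x + y) ^ q = x ^ q + y ^ q" for x y :: 'y
  proof -
    have "(x + y) ^ q = (\<Sum>i\<le>q. of_nat (q choose i) * x ^ i * y ^ (q - i))"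
      by (rule binomial_ring)
    also have "\<dots> = (\<Sum>i\<in>{0, q}. of_nat (q choose i) * x ^ i * y ^ (q - i))"
      by (rule sum.mono_neutral_right) (auto simp: binomial_0)
    finally show ?thesis using q by (simp add: add_ac)
  qed
  have frob: "ring_morphism (\<lambda>y::'y. y ^ q)"
    by unfold_locales (simp_all add: add power_mult_distrib)
  have "ring_morphism (\<lambda>y::'y. y ^ (q ^ j))"
  proof (induction j)
    case (Suc j)
    have "(\<lambda>y::'y. y ^ (q ^ Suc j)) = (\<lambda>y. y ^ q) \<circ> (\<lambda>y. y ^ (q ^ j))"
      by (auto simp: power_mult[symmetric] mult.commute)
    thus ?case using ring_morphism_comp[OF frob Suc] by simp
  qed (unfold_locales, simp_all)
  thus ?thesis by (simp add: q_def)
qed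

section \<open>Descent and subfields\<close>

text \<open>If a field with q elements embeds into a domain, its image is exactly the set of
  fixed points of the q-th power map: the image consists of fixed points and already
  has the maximal possible number q of them.\<close>
lemma fixed_points_eq_range:
  fixes h :: "'x::{field,finite} \<Rightarrow> 'y::idom"
  assumes h: "ring_morphism h"
  shows "{z. z ^ CARD('x) = z} = range h"
proof -
  define q where "q = CARD('x)"
  have q2: "q \<ge> 2" unfolding q_def by (rule card_field_ge_2)
  have sub: "range h \<subseteq> {z. z ^ q = z}"
    by (auto simp: q_def power_card_field simp flip: ring_morphism.hom_power[OF h])
  have "card (range h) = q" unfolding q_def using morphism_inj[OF h] by (simp add: card_image)
  hence "card {z::'y. z ^ q = z} \<le> card (range h)" using card_power_fixed_le(2)[OF q2] by simp
  hence "range h = {z. z ^ q = z}"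
    using card_subset_eq[OF card_power_fixed_le(1)[OF q2] sub] card_mono[OF card_power_fixed_le(1)[OF q2] sub]
    by linarith
  thus ?thesis by (simp add: q_def)
qed

lemma descend_poly:
  fixes h :: "'x::{field,finite} \<Rightarrow> 'y::idom" and p :: "'y poly"
  assumes h: "ring_morphism h" and fixed: "map_poly (\<lambda>c. c ^ CARD('x)) p = p"
  shows "\<exists>p0. map_poly h p0 = p"
proof -
  have "coeff p i \<in> range h" for i
  proof -
    have "coeff p i ^ CARD('x) = coeff p i"
      using arg_cong[OF fixed, of "\<lambda>p. coeff p i"] card_field_ge_2[where 'x='x]
      by (simp add: coeff_map_poly)
    thus ?thesis using fixed_points_eq_range[OF h] by blast
  qed
  hence "map_poly h (map_poly (inv_into UNIV h) p) = p"
    by (intro poly_eqI) (simp add: coeff_map_poly ring_morphism.hom_zero[OF h] f_inv_into_f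
        inv_f_f[OF morphism_inj[OF h]] flip: ring_morphism.hom_zero[OF h])
  thus ?thesis by blast
qed

lemma is_subfield_gen_subfield: "is_subfield (gen_subfield S)"
  unfolding gen_subfield_def is_subfield_def by auto

lemma gen_subfield_superset: "S \<subseteq> gen_subfield S"
  unfolding gen_subfield_def by blast

lemma gen_subfield_least: "is_subfield K \<Longrightarrow> S \<subseteq> K \<Longrightarrow> gen_subfield S \<subseteq> K"
  unfolding gen_subfield_def by blast

lemma fixed_points_subfield:
  fixes \<sigma> :: "'y::field \<Rightarrow> 'y"
  assumes \<sigma>: "ring_morphism \<sigma>"
  shows "is_subfield {x. \<sigma> x = x}"
  unfolding is_subfield_def
  using ring_morphism.hom_zero[OF \<sigma>] ring_morphism.hom_one[OF \<sigma>] ring_morphism.hom_add[OF \<sigma>]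
    ring_morphism.hom_mult[OF \<sigma>] ring_morphism.hom_uminus[OF \<sigma>] morphism_inverse[OF \<sigma>]
  by simp

text \<open>A subfield K of a finite field that contains the image of a field with q
  elements is a vector space over it, hence has q^d elements for some d.\<close>
lemma card_subfield_over:
  fixes h :: "'x::{field,finite} \<Rightarrow> 'y::{field,finite}"
  assumes h: "ring_morphism h" and K: "is_subfield K" and range: "range h \<subseteq> K"
  shows "\<exists>d. card K = CARD('x) ^ d"
proof -
  interpret V: vector_space "\<lambda>c (y::'y). h c * y"
    by unfold_locales (simp_all add: ring_morphism.hom_add[OF h] ring_morphism.hom_mult[OF h]
        ring_morphism.hom_one[OF h] distrib_left distrib_right)
  have "V.subspace K"
    unfolding V.subspace_def
  proof (intro conjI ballI allI)
    fix c x assume "x \<in> K"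
    thus "h c * x \<in> K" using K range unfolding is_subfield_def by blast
  qed (use K in \<open>simp_all add: is_subfield_def\<close>)
  obtain B where B: "B \<subseteq> K" "V.independent B" "K \<subseteq> V.span B"
    using V.basis_exists[of K] by metis
  have K_span: "K = V.span B" using V.span_minimal[OF B(1) \<open>V.subspace K\<close>] B(3) by blast
  define coords where "coords = (\<lambda>u. \<Sum>v\<in>B. h (u v) * v)"
  have span_eq: "V.span B = coords ` (PiE B (\<lambda>_. UNIV))"
  proof -
    have "coords u \<in> coords ` (PiE B (\<lambda>_. UNIV))" for u
    proof -
      have "coords u = coords (restrict u B)"
        unfolding coords_def by (intro sum.cong) auto
      thus ?thesis by (intro image_eqI[of _ _ "restrict u B"]) auto
    qed
    hence "range coords = coords ` (PiE B (\<lambda>_. UNIV))" by blast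
    thus ?thesis unfolding coords_def by (simp add: V.span_finite)
  qed
  have "inj_on coords (PiE B (\<lambda>_. UNIV))"
  proof (rule inj_onI)
    fix u u' assume u: "u \<in> PiE B (\<lambda>_. UNIV)" and u': "u' \<in> PiE B (\<lambda>_. UNIV)"
      and eq: "coords u = coords u'"
    have "(\<Sum>v\<in>B. h (u v - u' v) * v) = coords u - coords u'"
      unfolding coords_def
      by (simp add: sum_subtractf ring_morphism.hom_diff[OF h] algebra_simps)
    hence "(\<Sum>v\<in>B. h (u v - u' v) * v) = 0" using eq by simp
    hence "\<forall>v\<in>B. u v - u' v = 0"
      using V.independentD[OF B(2) finite order_refl, of "\<lambda>v. u v - u' v"] by simp
    thus "u = u'" using u u' by (intro PiE_ext) auto
  qed
  hence "card K = card (PiE B (\<lambda>_::'y. UNIV :: 'x set))"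
    unfolding K_span span_eq by (rule card_image)
  also have "\<dots> = CARD('x) ^ card B" by (simp add: card_PiE)
  finally show ?thesis by blast
qed

section \<open>Periods of iterates and products of polynomials\<close>

lemma funpow_eq_imp_period:
  assumes "inj \<sigma>" "(\<sigma> ^^ i) x = (\<sigma> ^^ i') x" "i \<le> i'"
  shows "(\<sigma> ^^ (i' - i)) x = x"
proof -
  have "(\<sigma> ^^ i) ((\<sigma> ^^ (i' - i)) x) = (\<sigma> ^^ i) x"
    using assms(2,3) by (metis funpow_add le_add_diff_inverse o_apply)
  thus ?thesis using inj_fn[OF assms(1)] by (simp add: inj_eq)
qed

lemma inj_on_orbit:
  assumes "inj \<sigma>" and aperiodic: "\<And>d. 0 < d \<Longrightarrow> d < N \<Longrightarrow> (\<sigma> ^^ d) x \<noteq> x"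
  shows "inj_on (\<lambda>i. (\<sigma> ^^ i) x) {..<N}"
proof (rule inj_onI)
  fix i i' assume eq: "(\<sigma> ^^ i) x = (\<sigma> ^^ i') x" and i: "i \<in> {..<N}" and i': "i' \<in> {..<N}"
  show "i = i'"
  proof (cases i i' rule: linorder_cases)
    case less
    thus ?thesis using funpow_eq_imp_period[OF assms(1) eq] aperiodic[of "i' - i"] i'
      by (simp add: less_imp_diff_less)
  next
    case greater
    thus ?thesis using funpow_eq_imp_period[OF assms(1) eq[symmetric]] aperiodic[of "i - i'"] i
      by (simp add: less_imp_diff_less)
  qed
qed

lemma periodic_if_orbit_finite:
  assumes "inj \<sigma>" "finite R" "\<And>i. (\<sigma> ^^ i) x \<in> R"
  shows "\<exists>d>0. (\<sigma> ^^ d) x = x"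
proof (rule ccontr)
  assume "\<not> ?thesis"
  hence "inj_on (\<lambda>i. (\<sigma> ^^ i) x) {..<Suc (card R)}"
    using inj_on_orbit[OF assms(1)] by blast
  hence "card ((\<lambda>i. (\<sigma> ^^ i) x) ` {..<Suc (card R)}) = Suc (card R)"
    by (simp add: card_image)
  moreover have "card ((\<lambda>i. (\<sigma> ^^ i) x) ` {..<Suc (card R)}) \<le> card R"
    using assms(2,3) by (intro card_mono) auto
  ultimately show False by simp
qed

lemma funpow_mult_fixed:
  assumes "(\<sigma> ^^ j) x = x"
  shows "(\<sigma> ^^ (j * t)) x = x"
  by (induction t) (simp_all add: funpow_add assms)

lemma funpow_fixed_iff_least_power_dvd:
  assumes "(\<sigma> ^^ d) x = x" "d > 0"
  shows "(\<sigma> ^^ j) x = x \<longleftrightarrow> least_power \<sigma> x dvd j"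
proof
  assume "least_power \<sigma> x dvd j"
  then obtain t where "j = least_power \<sigma> x * t" by blast
  thus "(\<sigma> ^^ j) x = x"
    using funpow_mult_fixed[OF least_powerI(1)[OF assms]] by simp
qed (rule least_power_minimal)

lemma prod_lessThan_shift_periodic:
  fixes u :: "nat \<Rightarrow> 'c::comm_monoid_mult"
  assumes "u d = u 0"
  shows "(\<Prod>i<d. u (Suc i)) = (\<Prod>i<d. u i)"
proof (cases d)
  case (Suc d')
  have "(\<Prod>i<d. u (Suc i)) = (\<Prod>i<d'. u (Suc i)) * u 0"
    using assms by (simp add: Suc)
  also have "\<dots> = (\<Prod>i<d. u i)"
    unfolding Suc prod.lessThan_Suc_shift by (simp add: mult.commute)
  finally show ?thesis .
qed simp

lemma prod_lessThan_periodic_power: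
  fixes u :: "nat \<Rightarrow> 'c::comm_monoid_mult"
  assumes periodic: "\<And>i. u (d + i) = u i"
  shows "(\<Prod>i<d * t. u i) = (\<Prod>i<d. u i) ^ t"
proof (induction t)
  case (Suc t)
  have shift: "u (d * s + i) = u i" for s i
  proof (induction s)
    case (Suc s)
    have "d * Suc s + i = d + (d * s + i)" by simp
    thus ?case using periodic[of "d * s + i"] Suc by (simp only:)
  qed simp
  have "(\<Prod>i<d * Suc t. u i) = prod u {0..<d * t} * prod u {0 + d * t..<d + d * t}"
    using prod.atLeastLessThan_concat[of 0 "d * t" "d + d * t" u] by (simp add: atLeast0LessThan)
  also have "prod u {0 + d * t..<d + d * t} = (\<Prod>i<d. u (d * t + i))"
    by (simp only: prod.atLeastLessThan_shift_bounds atLeast0LessThan) (simp add: o_def add.commute)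
  finally show ?case by (simp add: shift Suc atLeast0LessThan mult.commute)
qed simp

lemma not_irreducible_power:
  fixes H :: "'x::field poly"
  assumes "degree H > 0" "t \<ge> 2"
  shows "\<not> irreducible (H ^ t)"
proof
  assume irr: "irreducible (H ^ t)"
  have "H \<noteq> 0" using assms(1) by auto
  have "H ^ t = H * H ^ (t - 1)" using assms(2) by (cases t) auto
  moreover have "\<not> is_unit H" "\<not> is_unit (H ^ (t - 1))"
    using assms \<open>H \<noteq> 0\<close> by (simp_all add: is_unit_iff_degree degree_power_eq)
  ultimately show False using Factorial_Ring.irreducibleD[OF irr] by blast
qed

text \<open>An irreducible polynomial has minimal degree among the nonzero polynomials sharing
  one of its roots (in some extension): a nonzero polynomial p0 of least degree with
  that root divides f, since the remainder of f modulo p0 has the root as well.\<close>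
lemma irreducible_degree_le_if_common_root:
  fixes h :: "'x::field \<Rightarrow> 'y::field" and f p :: "'x poly"
  assumes h: "ring_morphism h" and irr: "irreducible f"
    and root_f: "poly (map_poly h f) \<theta> = 0"
    and p: "p \<noteq> 0" and root_p: "poly (map_poly h p) \<theta> = 0"
  shows "degree f \<le> degree p"
proof -
  interpret P: ring_morphism "map_poly h" by (rule ring_morphism.map_poly_morphism[OF h])
  define has_root where "has_root = (\<lambda>r::'x poly. r \<noteq> 0 \<and> poly (map_poly h r) \<theta> = 0)"
  obtain p0 where p0: "has_root p0" and p0_min: "\<And>r. has_root r \<Longrightarrow> degree p0 \<le> degree r"
    using ex_has_least_nat[of has_root p degree] p root_p unfolding has_root_def by blast
  have "f mod p0 = 0"
  proof (rule ccontr)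
    assume nz: "f mod p0 \<noteq> 0"
    have "poly (map_poly h f) \<theta> = poly (map_poly h (f div p0 * p0 + f mod p0)) \<theta>"
      by simp
    also have "\<dots> = poly (map_poly h (f div p0)) \<theta> * poly (map_poly h p0) \<theta>
        + poly (map_poly h (f mod p0)) \<theta>"
      by (simp only: P.hom_add P.hom_mult poly_add poly_mult)
    finally have "has_root (f mod p0)"
      using root_f p0 nz unfolding has_root_def by simp
    hence "degree p0 \<le> degree (f mod p0)" by (rule p0_min)
    moreover have "degree (f mod p0) < degree p0"
      using p0 nz unfolding has_root_def by (intro degree_mod_less') auto
    ultimately show False by simp
  qed
  then obtain c where f_eq: "f = p0 * c" by (metis mod_eq_0_iff_dvd dvdE)
  have "\<not> is_unit p0"
  proof
    assume "is_unit p0"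
    then obtain a where "p0 = [:a:]" "a \<noteq> 0"
      using p0 unfolding has_root_def by (metis is_unit_iff_degree degree_eq_zeroE pCons_0_0)
    thus False using p0 unfolding has_root_def
      by (simp add: ring_morphism.map_poly_pCons[OF h] ring_morphism.hom_zero[OF h] morphism_eq_0_iff[OF h])
  qed
  hence "is_unit c" using Factorial_Ring.irreducibleD[OF irr f_eq] by blast
  moreover from this have "c \<noteq> 0" by auto
  ultimately have "c \<noteq> 0" "degree c = 0" by (simp_all add: is_unit_iff_degree)
  hence "degree f = degree p0"
    using f_eq p0 unfolding has_root_def by (simp add: degree_mult_eq)
  also have "\<dots> \<le> degree p" using p0_min p root_p unfolding has_root_def by blast
  finally show ?thesis .
qed

section \<open>The product of the conjugates of g\<close>

text \<open>The setting of the theorem: F_q is the type 'a, F_(q^k) is the type 'b with the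
  embedding emb, and g(x) = f(alpha x + beta).\<close>
locale frobenius_product =
  fixes emb :: "'a::{field,finite} \<Rightarrow> 'b::{field,finite}"
    and f :: "'a poly" and n k :: nat and \<alpha> \<beta> :: 'b
  assumes emb: "ring_morphism emb"
    and card_b: "CARD('b) = CARD('a) ^ k"
    and n_gt: "n > 1" and k_ge: "k \<ge> 1" and cop: "coprime n k"
    and irr: "irreducible f" and deg: "degree f = n"
    and alpha_nz: "\<alpha> \<noteq> 0"
begin

definition g :: "'b poly" where "g = pcompose (map_poly emb f) [:\<beta>, \<alpha>:]"

definition conjugate :: "nat \<Rightarrow> 'b poly" where "conjugate a = frob_poly CARD('a) a g"

definition F :: "'b poly" where "F = (\<Prod>a<k. conjugate a)"

definition fixes_gens :: "nat \<Rightarrow> bool" where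
  "fixes_gens j \<longleftrightarrow> \<alpha> ^ (CARD('a) ^ j) = \<alpha> \<and> \<beta> ^ (CARD('a) ^ j) = \<beta>"

lemma frobenius_b: "ring_morphism (\<lambda>y::'b. y ^ (CARD('a) ^ j))"
  by (rule frobenius_morphism[OF emb])

lemma power_qk: "(x::'b) ^ (CARD('a) ^ (k * t)) = x"
  by (rule power_power_fixed_mult) (simp add: power_card_field flip: card_b)

lemma emb_fixed: "emb c ^ (CARD('a) ^ j) = emb c"
  by (simp add: power_card_power_field flip: ring_morphism.hom_power[OF emb])

lemma degree_g: "degree g = n"
  by (simp add: g_def degree_pcompose degree_map_poly_morphism[OF emb] deg alpha_nz)

lemma conjugate_altdef: "conjugate a = map_poly (\<lambda>c. c ^ (CARD('a) ^ a)) g"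
  by (simp add: conjugate_def frob_poly_def)

lemma conjugate_0: "conjugate 0 = g"
  by (simp add: conjugate_altdef)

lemma degree_conjugate: "degree (conjugate a) = n"
  unfolding conjugate_altdef
  by (simp add: degree_map_poly_morphism[OF frobenius_b] degree_g)

lemma conjugate_shift: "map_poly (\<lambda>c. c ^ (CARD('a) ^ j)) (conjugate a) = conjugate (a + j)"
  unfolding conjugate_altdef
  by (subst map_poly_map_poly) (simp_all add: o_def power_power_add)

lemma conjugate_period:
  assumes "fixes_gens d"
  shows "conjugate d = g"
proof -
  interpret \<Phi>: ring_morphism "\<lambda>y::'b. y ^ (CARD('a) ^ d)" by (rule frobenius_b)
  have "map_poly (\<lambda>c. c ^ (CARD('a) ^ d)) (map_poly emb f) = map_poly emb f"
    by (subst map_poly_map_poly) (simp_all add: o_def emb_fixed ring_morphism.hom_zero[OF emb])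
  moreover have "map_poly (\<lambda>c. c ^ (CARD('a) ^ d)) [:\<beta>, \<alpha>:] = [:\<beta>, \<alpha>:]"
    using assms by (simp add: \<Phi>.map_poly_pCons fixes_gens_def)
  ultimately show ?thesis
    unfolding conjugate_altdef g_def \<Phi>.map_poly_pcompose by simp
qed

lemma fixes_gens_k: "fixes_gens (k * t)"
  by (simp add: fixes_gens_def power_qk)

lemma conjugate_periodic:
  assumes "conjugate d = g"
  shows "conjugate (d + i) = conjugate i"
  using conjugate_shift[of i d] unfolding assms by (simp add: conjugate_altdef[of i])

text \<open>Over a period d, the product of the conjugates is fixed by the Frobenius, hence
  has its coefficients in F_q.\<close>
lemma prod_conjugate_descends:
  assumes "conjugate d = g"
  shows "\<exists>H0. map_poly emb H0 = (\<Prod>a<d. conjugate a)"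
proof (rule descend_poly[OF emb])
  interpret \<Phi>: ring_morphism "map_poly (\<lambda>y::'b. y ^ CARD('a))"
    using ring_morphism.map_poly_morphism[OF frobenius_b[of 1]] by simp
  have "map_poly (\<lambda>c. c ^ CARD('a)) (\<Prod>a<d. conjugate a) = (\<Prod>a<d. conjugate (Suc a))"
    using conjugate_shift[of 1] by (simp add: \<Phi>.hom_prod)
  also have "\<dots> = (\<Prod>a<d. conjugate a)"
    by (rule prod_lessThan_shift_periodic) (simp add: assms conjugate_0)
  finally show "map_poly (\<lambda>c. c ^ CARD('a)) (\<Prod>a<d. conjugate a) = (\<Prod>a<d. conjugate a)" .
qed

lemma degree_prod_conjugate: "degree (\<Prod>a<d. conjugate a) = d * n"
proof -
  have "conjugate a \<noteq> 0" for a using degree_conjugate[of a] n_gt by auto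
  thus ?thesis by (simp add: degree_prod_eq_sum_degree degree_conjugate)
qed

text \<open>If every element of F_(q^k) is fixed by the (q^j)-th power, then k divides j:
  otherwise the gcd d of j and k is a proper divisor of k, and x^(q^d) = x would have
  q^k > q^d solutions.\<close>
lemma all_fixed_imp_dvd:
  assumes all_fixed: "\<And>x::'b. x ^ (CARD('a) ^ j) = x"
  shows "k dvd j"
proof -
  define d where "d = gcd j k"
  have "d > 0" "d dvd k" using k_ge by (simp_all add: d_def)
  have fixed: "(x::'b) ^ (CARD('a) ^ d) = x" for x
    unfolding d_def by (rule power_power_fixed_gcd[OF all_fixed]) (simp add: power_card_field flip: card_b)
  have q2: "CARD('a) \<ge> 2" by (rule card_field_ge_2)
  moreover have "CARD('a) ^ 1 \<le> CARD('a) ^ d"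
    using \<open>d > 0\<close> q2 by (intro power_increasing) auto
  ultimately have "CARD('a) ^ d \<ge> 2" by simp
  hence "card {x::'b. x ^ (CARD('a) ^ d) = x} \<le> CARD('a) ^ d"
    by (rule card_power_fixed_le(2))
  hence "CARD('a) ^ k \<le> CARD('a) ^ d" using fixed by (simp add: card_b)
  hence "k \<le> d" using q2 by (simp add: power_le_imp_le_exp)
  hence "d = k" using \<open>d dvd k\<close> k_ge by (simp add: dvd_imp_le le_antisym)
  thus ?thesis using gcd_dvd1[of j k] by (simp add: d_def)
qed

lemma generates_iff:
  "gen_subfield (range emb \<union> {\<alpha>, \<beta>}) = UNIV \<longleftrightarrow> (\<forall>j. fixes_gens j \<longrightarrow> k dvd j)"
proof
  assume gen: "gen_subfield (range emb \<union> {\<alpha>, \<beta>}) = UNIV"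
  show "\<forall>j. fixes_gens j \<longrightarrow> k dvd j"
  proof (intro allI impI)
    fix j assume "fixes_gens j"
    hence "range emb \<union> {\<alpha>, \<beta>} \<subseteq> {x. x ^ (CARD('a) ^ j) = x}"
      by (auto simp: fixes_gens_def emb_fixed)
    hence "gen_subfield (range emb \<union> {\<alpha>, \<beta>}) \<subseteq> {x. x ^ (CARD('a) ^ j) = x}"
      by (rule gen_subfield_least[OF fixed_points_subfield[OF frobenius_b]])
    thus "k dvd j" using gen by (intro all_fixed_imp_dvd) auto
  qed
next
  define L where "L = gen_subfield (range emb \<union> {\<alpha>, \<beta>})"
  assume dvd: "\<forall>j. fixes_gens j \<longrightarrow> k dvd j"
  show "L = UNIV"
  proof (rule ccontr)
    assume "L \<noteq> UNIV"
    have L: "is_subfield L" "range emb \<union> {\<alpha>, \<beta>} \<subseteq> L"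
      unfolding L_def by (rule is_subfield_gen_subfield, rule gen_subfield_superset)
    then obtain d where d: "card L = CARD('a) ^ d"
      using card_subfield_over[OF emb] by blast
    have "card L < CARD('b)" using \<open>L \<noteq> UNIV\<close> by (intro psubset_card_mono) auto
    hence "d < k" using d card_field_ge_2[where 'x='a] by (simp add: card_b power_less_imp_less_exp)
    moreover have "d \<noteq> 0"
    proof
      assume "d = 0"
      moreover have "card {0::'b, 1} \<le> card L" using L(1) by (intro card_mono) (auto simp: is_subfield_def)
      ultimately show False using d by simp
    qed
    moreover have "fixes_gens d"
      using L subfield_power_card[OF L(1)] by (simp add: fixes_gens_def flip: d)
    ultimately show False using dvd dvd_imp_le[of k d] by auto
  qed
qed

text \<open>If alpha, beta are fixed by the (q^d)-th power for a proper divisor d of k, then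
  F is the (k/d)-th power of the product of the first d conjugates, which lies in F_q[x].\<close>
lemma reducible_if_not_generating:
  assumes fixed: "fixes_gens j" and not_dvd: "\<not> k dvd j" and F0: "map_poly emb F0 = F"
  shows "\<not> irreducible F0"
proof -
  define d where "d = gcd j k"
  have "d > 0" "d dvd k" using k_ge by (simp_all add: d_def)
  then obtain t where t: "k = d * t" by blast
  have "d \<noteq> k" using not_dvd by (metis d_def gcd_dvd1)
  hence "t \<noteq> 0" "t \<noteq> 1" using t k_ge by auto
  hence "t \<ge> 2" by arith
  have "fixes_gens d"
    using fixed fixes_gens_k[of 1] unfolding fixes_gens_def d_def by (auto intro: power_power_fixed_gcd)
  hence period: "conjugate d = g" by (rule conjugate_period)
  obtain H0 where H0: "map_poly emb H0 = (\<Prod>a<d. conjugate a)"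
    using prod_conjugate_descends[OF period] by blast
  have "F = (\<Prod>a<d * t. conjugate a)"
    unfolding F_def by (simp only: t)
  also have "\<dots> = (\<Prod>a<d. conjugate a) ^ t"
    by (rule prod_lessThan_periodic_power) (rule conjugate_periodic[OF period])
  also have "\<dots> = map_poly emb (H0 ^ t)"
    using ring_morphism.hom_power[OF ring_morphism.map_poly_morphism[OF emb]] by (simp add: H0)
  finally have "F0 = H0 ^ t" using F0 by (auto intro: map_poly_morphism_inj[OF emb])
  moreover have "degree H0 = d * n"
    using H0 degree_prod_conjugate[of d] degree_map_poly_morphism[OF emb, of H0] by simp
  ultimately show ?thesis using not_irreducible_power \<open>t \<ge> 2\<close> \<open>d > 0\<close> n_gt by simp
qed

definition frob :: "'b alg_closure \<Rightarrow> 'b alg_closure" where "frob z = z ^ CARD('a)"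

definition emb_ac :: "'a \<Rightarrow> 'b alg_closure" where "emb_ac = to_ac \<circ> emb"

definition f_ac :: "'b alg_closure poly" where "f_ac = map_poly emb_ac f"

definition g_ac :: "'b alg_closure poly" where "g_ac = map_poly to_ac g"

lemma to_ac_morphism: "ring_morphism (to_ac :: 'b \<Rightarrow> 'b alg_closure)"
  by unfold_locales simp_all

lemma emb_ac_morphism: "ring_morphism emb_ac"
  unfolding emb_ac_def by (rule ring_morphism_comp[OF to_ac_morphism emb])

lemma frob_iter: "frob ^^ j = (\<lambda>z. z ^ (CARD('a) ^ j))"
proof (induction j)
  case (Suc j)
  thus ?case by (auto simp: frob_def power_mult[symmetric] mult.commute)
qed simp

lemma frob_iter_morphism: "ring_morphism (frob ^^ j)"
  unfolding frob_iter by (rule frobenius_morphism[OF emb_ac_morphism])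

lemma inj_frob_iter: "inj (frob ^^ j)"
  by (rule morphism_inj[OF frob_iter_morphism])

lemma surj_frob_iter: "\<exists>w. (frob ^^ j) w = z"
  unfolding frob_iter using nth_root_exists[of "CARD('a) ^ j" z] by simp

lemma frob_iter_commute: "(frob ^^ i) ((frob ^^ j) z) = (frob ^^ j) ((frob ^^ i) z)"
  by (metis add.commute comp_apply funpow_add)

lemma frob_iter_to_ac: "(frob ^^ j) (to_ac x) = to_ac (x ^ (CARD('a) ^ j))"
  by (simp add: frob_iter)

lemma map_frob_emb_ac: "map_poly (frob ^^ j) (map_poly emb_ac p) = map_poly emb_ac p"
  by (subst map_poly_map_poly)
     (simp_all add: frob_iter o_def emb_ac_def emb_fixed ring_morphism.hom_zero[OF emb]
       flip: to_ac_power)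

lemma root_frob_iter:
  assumes "poly (map_poly emb_ac p) z = 0"
  shows "poly (map_poly emb_ac p) ((frob ^^ j) z) = 0"
  using ring_morphism.poly_map_poly[OF frob_iter_morphism, of j "map_poly emb_ac p" z]
    ring_morphism.hom_zero[OF frob_iter_morphism] assms
  by (simp add: map_frob_emb_ac)

lemma degree_f_ac: "degree f_ac = n"
  by (simp add: f_ac_def degree_map_poly_morphism[OF emb_ac_morphism] deg)

lemma f_ac_nonzero: "f_ac \<noteq> 0"
  using degree_f_ac n_gt by auto

text \<open>Every root theta of f is periodic under the Frobenius, since its orbit stays in the
  finite set of roots of f; by the same token its least period is at most n.\<close>
lemma root_periodic:
  assumes "poly f_ac \<theta> = 0"
  shows "\<exists>d>0. (frob ^^ d) \<theta> = \<theta>"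
  by (rule periodic_if_orbit_finite[OF inj_frob_iter[of 1, simplified] poly_roots_finite[OF f_ac_nonzero]])
     (simp add: root_frob_iter[OF assms[unfolded f_ac_def], folded f_ac_def])

lemma least_period_le_degree:
  assumes root: "poly f_ac \<theta> = 0"
  shows "least_power frob \<theta> \<le> n"
proof -
  define d where "d = least_power frob \<theta>"
  have "(frob ^^ e) \<theta> \<noteq> \<theta>" if "0 < e" "e < d" for e
    using least_power_le[where f = frob and x = \<theta> and n = e] that unfolding d_def by auto
  hence "inj_on (\<lambda>i. (frob ^^ i) \<theta>) {..<d}"
    by (rule inj_on_orbit[OF inj_frob_iter[of 1, simplified]])
  hence "d = card ((\<lambda>i. (frob ^^ i) \<theta>) ` {..<d})" by (simp add: card_image)
  also have "\<dots> \<le> card {z. poly f_ac z = 0}"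
    by (intro card_mono poly_roots_finite[OF f_ac_nonzero]) (auto simp: root_frob_iter[OF root[unfolded f_ac_def], folded f_ac_def])
  also have "\<dots> \<le> n" using card_poly_roots_bound[OF f_ac_nonzero] degree_f_ac by simp
  finally show ?thesis by (simp add: d_def)
qed

text \<open>Conversely every period d of a root is at least n: the polynomial whose roots are
  the d iterates of theta is fixed by the Frobenius, so it comes from F_q[x], and the
  irreducible f divides it.\<close>
lemma degree_le_period:
  assumes root: "poly f_ac \<theta> = 0" and period: "(frob ^^ d) \<theta> = \<theta>" "d > 0"
  shows "n \<le> d"
proof -
  define M where "M = (\<Prod>i<d. [:- (frob ^^ i) \<theta>, 1:])"
  interpret \<Phi>: ring_morphism "map_poly frob"
    using ring_morphism.map_poly_morphism[OF frob_iter_morphism[of 1]] by simp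
  have "map_poly frob M = (\<Prod>i<d. [:- (frob ^^ Suc i) \<theta>, 1:])"
    unfolding M_def \<Phi>.hom_prod
    using ring_morphism.map_poly_pCons[OF frob_iter_morphism[of 1]]
      ring_morphism.hom_uminus[OF frob_iter_morphism[of 1]]
      ring_morphism.hom_one[OF frob_iter_morphism[of 1]] by simp
  also have "\<dots> = M"
    unfolding M_def by (rule prod_lessThan_shift_periodic) (simp add: period)
  finally obtain M0 where M0: "map_poly emb_ac M0 = M"
    using descend_poly[OF emb_ac_morphism, of M] by (auto simp: frob_def[abs_def])
  have "degree M = d" unfolding M_def by (simp add: degree_prod_eq_sum_degree)
  moreover have "poly M \<theta> = 0"
    unfolding M_def poly_prod using period(2) by (intro prod_zero) (auto intro!: bexI[of _ 0])
  moreover have "M0 \<noteq> 0" using M0 unfolding M_def by auto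
  ultimately have "degree f \<le> degree M0"
    using irreducible_degree_le_if_common_root[OF emb_ac_morphism irr] root M0
    unfolding f_ac_def by metis
  thus ?thesis
    using M0 \<open>degree M = d\<close> degree_map_poly_morphism[OF emb_ac_morphism, of M0] by (simp add: deg)
qed

lemma root_fixed_iff:
  assumes root: "poly f_ac \<theta> = 0"
  shows "(frob ^^ j) \<theta> = \<theta> \<longleftrightarrow> n dvd j"
proof -
  obtain d where d: "d > 0" "(frob ^^ d) \<theta> = \<theta>" using root_periodic[OF root] by blast
  have "least_power frob \<theta> = n"
    using least_period_le_degree[OF root] degree_le_period[OF root least_powerI[OF d(2,1)]] by simp
  thus ?thesis using funpow_fixed_iff_least_power_dvd[OF d(2,1)] by simp
qed

lemma root_g_imp_root_f:
  assumes "poly g_ac w = 0"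
  shows "poly f_ac (to_ac \<alpha> * w + to_ac \<beta>) = 0"
proof -
  have "g_ac = pcompose f_ac [:to_ac \<beta>, to_ac \<alpha>:]"
    unfolding g_ac_def g_def f_ac_def emb_ac_def ring_morphism.map_poly_pcompose[OF to_ac_morphism]
    by (subst map_poly_map_poly)
       (simp_all add: ring_morphism.map_poly_pCons[OF to_ac_morphism] ring_morphism.hom_zero[OF emb])
  thus ?thesis using assms by (simp add: poly_pcompose algebra_simps)
qed

text \<open>If the j-th iterate fixes w, then the (jk)-th fixes
  theta = alpha w + beta, so n divides j; then it fixes theta itself, and this forces
  it to fix alpha and beta (otherwise w, hence theta, would lie in F_(q^k), whose
  elements have period dividing k, contradicting n > 1 and gcd(n,k) = 1), so k divides j.\<close>
lemma root_g_period:
  assumes gen: "\<forall>j. fixes_gens j \<longrightarrow> k dvd j"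
    and root: "poly g_ac w = 0" and fixed: "(frob ^^ j) w = w"
  shows "n * k dvd j"
proof -
  define a b where "a = to_ac \<alpha>" and "b = to_ac \<beta>"
  define \<theta> where "\<theta> = a * w + b"
  have root_\<theta>: "poly f_ac \<theta> = 0" unfolding \<theta>_def a_def b_def by (rule root_g_imp_root_f[OF root])
  have to_ac_fixed: "(frob ^^ (k * t)) (to_ac x) = to_ac x" for x t
    by (simp add: frob_iter_to_ac power_qk)
  have frob_\<theta>: "(frob ^^ i) \<theta> = (frob ^^ i) a * (frob ^^ i) w + (frob ^^ i) b" for i
    unfolding \<theta>_def
    by (simp add: ring_morphism.hom_add[OF frob_iter_morphism] ring_morphism.hom_mult[OF frob_iter_morphism])
  have "(frob ^^ (j * k)) \<theta> = \<theta>"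
    using frob_\<theta>[of "j * k"] funpow_mult_fixed[OF fixed, of k] to_ac_fixed[of j]
    unfolding \<theta>_def a_def b_def by (simp add: mult.commute)
  hence "n dvd j * k" by (simp add: root_fixed_iff[OF root_\<theta>])
  hence "n dvd j" using cop by (simp add: coprime_dvd_mult_left_iff)
  hence fixed_\<theta>: "(frob ^^ j) \<theta> = \<theta>" by (simp add: root_fixed_iff[OF root_\<theta>])
  have fixed_a: "(frob ^^ j) a = a"
  proof (rule ccontr)
    assume ne: "(frob ^^ j) a \<noteq> a"
    have "((frob ^^ j) a - a) * w = b - (frob ^^ j) b"
      using fixed_\<theta> frob_\<theta>[of j] fixed unfolding \<theta>_def by (simp add: algebra_simps)
    hence "w = (b - (frob ^^ j) b) / ((frob ^^ j) a - a)" using ne by (simp add: field_simps)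
    hence "\<theta> = to_ac (\<alpha> * ((\<beta> - \<beta> ^ (CARD('a) ^ j)) / (\<alpha> ^ (CARD('a) ^ j) - \<alpha>)) + \<beta>)"
      (is "\<theta> = to_ac ?c") unfolding \<theta>_def a_def b_def by (simp add: frob_iter_to_ac)
    hence "(frob ^^ k) \<theta> = \<theta>" using to_ac_fixed[of 1 ?c] by (simp only: mult_1_right)
    hence "n dvd k" by (simp add: root_fixed_iff[OF root_\<theta>])
    thus False using cop n_gt by (simp add: coprime_iff_gcd_eq_1 gcd_nat.absorb1)
  qed
  have "(frob ^^ j) b = b" using fixed_\<theta> frob_\<theta>[of j] fixed fixed_a unfolding \<theta>_def by simp
  hence "fixes_gens j"
    using fixed_a by (simp add: fixes_gens_def a_def b_def frob_iter_to_ac del: to_ac_power)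
  hence "k dvd j" using gen by blast
  with \<open>n dvd j\<close> show ?thesis using cop by (simp add: divides_mult)
qed

text \<open>Over Omega, F is the product of the Frobenius conjugates of g, so every root of F
  is an iterated Frobenius image of a root of g.\<close>
lemma map_to_ac_conjugate: "map_poly to_ac (conjugate a) = map_poly (frob ^^ a) g_ac"
  unfolding conjugate_altdef g_ac_def
  by (simp add: map_poly_map_poly o_def frob_iter)

lemma root_F_from_root_g:
  assumes F0: "map_poly emb F0 = F" and root: "poly (map_poly emb_ac F0) z = 0"
  shows "\<exists>a w. poly g_ac w = 0 \<and> z = (frob ^^ a) w"
proof -
  have "map_poly emb_ac F0 = map_poly to_ac F"
    unfolding emb_ac_def F0[symmetric]
    by (subst map_poly_map_poly) (simp_all add: ring_morphism.hom_zero[OF emb])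
  also have "\<dots> = (\<Prod>a<k. map_poly (frob ^^ a) g_ac)"
    unfolding F_def ring_morphism.hom_prod[OF ring_morphism.map_poly_morphism[OF to_ac_morphism]]
    by (simp add: map_to_ac_conjugate)
  finally obtain a where "poly (map_poly (frob ^^ a) g_ac) z = 0"
    using root by (auto simp: poly_prod prod_zero_iff)
  moreover obtain w where w: "(frob ^^ a) w = z" using surj_frob_iter by blast
  ultimately have "(frob ^^ a) (poly g_ac w) = 0"
    using ring_morphism.poly_map_poly[OF frob_iter_morphism] by metis
  hence "poly g_ac w = 0" by (simp add: morphism_eq_0_iff[OF frob_iter_morphism])
  thus ?thesis using w by blast
qed

text \<open>Consequently, if alpha and beta generate F_(q^k), every nonconstant factor u of F
  in F_q[x] has a root with nk distinct Frobenius iterates, all of which are roots of u.\<close>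
lemma degree_factor:
  assumes gen: "\<forall>j. fixes_gens j \<longrightarrow> k dvd j" and F0: "map_poly emb F0 = F"
    and u: "u dvd F0" "degree u > 0"
  shows "n * k \<le> degree u"
proof -
  define u_ac where "u_ac = map_poly emb_ac u"
  have deg_u_ac: "degree u_ac = degree u"
    unfolding u_ac_def by (rule degree_map_poly_morphism[OF emb_ac_morphism])
  hence u_ac_nonzero: "u_ac \<noteq> 0" using u(2) by auto
  obtain z where z: "poly u_ac z = 0" using alg_closed_imp_poly_has_root u(2) deg_u_ac by metis
  have "map_poly emb_ac u dvd map_poly emb_ac F0"
    using u(1) ring_morphism.hom_mult[OF ring_morphism.map_poly_morphism[OF emb_ac_morphism]]
    by (metis dvd_def)
  hence "poly (map_poly emb_ac F0) z = 0" using z unfolding u_ac_def by (metis dvdE mult_eq_0_iff poly_mult)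
  then obtain a w where w: "poly g_ac w = 0" "z = (frob ^^ a) w"
    using root_F_from_root_g[OF F0] by blast
  have "(frob ^^ e) z \<noteq> z" if "0 < e" "e < n * k" for e
  proof
    assume "(frob ^^ e) z = z"
    hence "(frob ^^ a) ((frob ^^ e) w) = (frob ^^ a) w"
      using w(2) frob_iter_commute by metis
    hence "(frob ^^ e) w = w" using inj_frob_iter by (simp add: inj_eq)
    hence "n * k dvd e" by (rule root_g_period[OF gen w(1)])
    thus False using that by (simp add: nat_dvd_not_less)
  qed
  hence "inj_on (\<lambda>i. (frob ^^ i) z) {..<n * k}"
    by (rule inj_on_orbit[OF inj_frob_iter[of 1, simplified]])
  hence "n * k = card ((\<lambda>i. (frob ^^ i) z) ` {..<n * k})" by (simp add: card_image)
  also have "\<dots> \<le> card {x. poly u_ac x = 0}"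
    using u_ac_nonzero root_frob_iter[of u z] z unfolding u_ac_def
    by (intro card_mono poly_roots_finite) auto
  also have "\<dots> \<le> degree u"
    using card_poly_roots_bound[OF u_ac_nonzero] deg_u_ac by simp
  finally show ?thesis .
qed

lemma irreducible_if_generating:
  assumes gen: "\<forall>j. fixes_gens j \<longrightarrow> k dvd j" and F0: "map_poly emb F0 = F"
  shows "irreducible F0"
proof (rule Factorial_Ring.irreducibleI)
  have deg_F0: "degree F0 = n * k"
    using F0 degree_prod_conjugate[of k] degree_map_poly_morphism[OF emb, of F0]
    by (simp add: F_def mult.commute)
  thus nonzero: "F0 \<noteq> 0" using n_gt k_ge by auto
  show "\<not> is_unit F0" using deg_F0 nonzero n_gt k_ge by (simp add: is_unit_iff_degree)
  fix a b assume ab: "F0 = a * b"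
  hence "a \<noteq> 0" "b \<noteq> 0" using nonzero by auto
  show "is_unit a \<or> is_unit b"
  proof (cases "degree a = 0")
    case False
    hence "n * k \<le> degree a" using degree_factor[OF gen F0] ab by auto
    hence "degree b = 0"
      using deg_F0 ab \<open>a \<noteq> 0\<close> \<open>b \<noteq> 0\<close> by (simp add: degree_mult_eq)
    thus ?thesis using \<open>b \<noteq> 0\<close> by (simp add: is_unit_iff_degree)
  qed (use \<open>a \<noteq> 0\<close> in \<open>simp add: is_unit_iff_degree\<close>)
qed

end

theorem theorem1:
  fixes emb :: "'a::{field,finite} \<Rightarrow> 'b::{field,finite}"
    and f :: "'a poly" and n k :: nat and \<alpha> \<beta> :: 'b
  assumes emb_add: "\<And>x y. emb (x + y) = emb x + emb y"
    and emb_mult: "\<And>x y. emb (x * y) = emb x * emb y"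
    and emb_one: "emb 1 = 1"
    and card_b: "CARD('b) = CARD('a) ^ k"
    and n_gt: "n > 1" and k_ge: "k \<ge> 1" and cop: "coprime n k"
    and irr: "irreducible f" and deg: "degree f = n"
    and alpha_nz: "\<alpha> \<noteq> 0"
  shows "let g = pcompose (map_poly emb f) [:\<beta>, \<alpha>:];
             F = (\<Prod>a<k. frob_poly CARD('a) a g)
         in \<exists>F0 :: 'a poly. map_poly emb F0 = F \<and> degree F0 = n * k \<and>
              (irreducible F0 \<longleftrightarrow>
                 gen_subfield (range emb \<union> {\<alpha>, \<beta>}) = UNIV)"
proof -
  interpret frobenius_product emb f n k \<alpha> \<beta>
    by unfold_locales (use emb_add emb_mult emb_one card_b n_gt k_ge cop irr deg alpha_nz in auto)
  obtain F0 where F0: "map_poly emb F0 = F"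
    using prod_conjugate_descends[OF conjugate_period[OF fixes_gens_k[of 1]]] by (auto simp: F_def)
  have "degree F0 = n * k"
    using F0 degree_prod_conjugate[of k] degree_map_poly_morphism[OF emb, of F0]
    by (simp add: F_def mult.commute)
  moreover have "irreducible F0 \<longleftrightarrow> gen_subfield (range emb \<union> {\<alpha>, \<beta>}) = UNIV"
    using irreducible_if_generating[OF _ F0] reducible_if_not_generating[OF _ _ F0]
    unfolding generates_iff by blast
  ultimately show ?thesis
    using F0 unfolding Let_def F_def conjugate_def g_def by blast
qed

end
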